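(* Let $\nu\in\mathbb{R}$ and let $(u_1,u_2,u_3)$ satisfy $-\nu<u_3<u_2<u_1$. Put $\gamma=u_1+u_2+u_3+2\nu$. Then for all $i\neq j$ in $\{1,2,3\}$ with $\lambda_i(u_1,u_2,u_3)\neq\lambda_j(u_1,u_2,u_3)$, $$\frac{\partial\lambda_i/\partial u_j}{\lambda_i-\lambda_j}=\frac12\,\frac{(\lambda_i-\gamma)-2(u_i-u_j)}{(\lambda_j-\gamma)(u_i-u_j)}.$$
   Context: For $-\nu<u_3<u_2<u_1$ define $$I(u_1,u_2,u_3)=\int_{u_3}^{u_2}\frac{\eta+\nu}{\sqrt{(\eta+\nu)(u_1-\eta)(u_2-\eta)(\eta-u_3)}}\,d\eta,$$ and for $i=1,2,3$ $$\lambda_i(u_1,u_2,u_3)=u_1+u_2+u_3+2\nu-\frac{I}{\partial I/\partial u_i}.$$ These $\lambda_i$ are the characteristic speeds of the single phase Whitham equations for the Camassa–Holm equation. *)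

theory Defs
  imports "HOL-Analysis.Analysis"
begin

text \<open>The integral I(u1,u2,u3) (convergent improper integral, taken as a
  Henstock-Kurzweil integral over the closed interval; endpoints are a null set).\<close>
definition Iint :: "real \<Rightarrow> real \<Rightarrow> real \<Rightarrow> real \<Rightarrow> real" where
  "Iint \<nu> u1 u2 u3 = integral {u3..u2}
     (\<lambda>\<eta>. (\<eta> + \<nu>) / sqrt ((\<eta> + \<nu>) * (u1 - \<eta>) * (u2 - \<eta>) * (\<eta> - u3)))"

definition Ivec :: "real \<Rightarrow> (nat \<Rightarrow> real) \<Rightarrow> real" where
  "Ivec \<nu> u = Iint \<nu> (u 1) (u 2) (u 3)"

definition pderiv_at :: "((nat \<Rightarrow> real) \<Rightarrow> real) \<Rightarrow> (nat \<Rightarrow> real) \<Rightarrow> nat \<Rightarrow> real" where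
  "pderiv_at F u i = deriv (\<lambda>t. F (u(i := t))) (u i)"

definition lam :: "real \<Rightarrow> (nat \<Rightarrow> real) \<Rightarrow> nat \<Rightarrow> real" where
  "lam \<nu> u i = u 1 + u 2 + u 3 + 2 * \<nu> - Ivec \<nu> u / pderiv_at (Ivec \<nu>) u i"

end

theory Submission
  imports Defs
begin

text \<open>After the substitution \<open>\<eta> = u\<^sub>3 + (u\<^sub>2 - u\<^sub>3) sin\<^sup>2 \<theta>\<close> the integral becomes
  \<open>J(u) = \<integral> 2 \<surd>(\<eta> + \<nu>) / \<surd>(u\<^sub>1 - \<eta>) d\<theta>\<close> over \<open>[0, \<pi>/2]\<close>, whose integrand is smooth
  in \<open>u\<close> and \<open>\<theta>\<close>, so it may be differentiated under the integral sign. As \<open>\<lambda>\<^sub>i = \<gamma> - J / \<partial>\<^sub>iJ\<close>, differentiating in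
  \<open>u\<^sub>j\<close> reduces the claim to an identity of rational functions in \<open>J, \<partial>\<^sub>iJ, \<partial>\<^sub>jJ, \<partial>\<^sub>i\<partial>\<^sub>jJ\<close>
  which holds because \<open>J\<close> satisfies the Euler-Poisson-Darboux equation
  \<open>2 (u\<^sub>i - u\<^sub>j) \<partial>\<^sub>i\<partial>\<^sub>jJ = \<partial>\<^sub>iJ - \<partial>\<^sub>jJ\<close>. This equation already holds for the integrands up to
  the \<open>\<theta>\<close>-derivative of \<open>sin \<theta> cos \<theta> G(\<eta>)\<close>, which vanishes at both ends of \<open>[0, \<pi>/2]\<close>.
  The denominators \<open>\<partial>\<^sub>kJ\<close> do not vanish because their integrands have a fixed sign.\<close>

definition wpow :: "real \<Rightarrow> real \<Rightarrow> real \<Rightarrow> real \<Rightarrow> real \<Rightarrow> real" where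
  "wpow \<nu> a b x e = (e + \<nu>) powr a * (x - e) powr b"

lemma wpow_pos: "e + \<nu> > 0 \<Longrightarrow> x - e > 0 \<Longrightarrow> wpow \<nu> a b x e > 0"
  by (simp add: wpow_def)

lemma wpow_succ: "x - e > 0 \<Longrightarrow> wpow \<nu> a (b + 1) x e = (x - e) * wpow \<nu> a b x e"
  by (simp add: wpow_def powr_add mult_ac)

lemma has_real_derivative_wpow_x:
  assumes "e + \<nu> > 0" "x - e > 0"
  shows "((\<lambda>x. wpow \<nu> a b x e) has_real_derivative b * wpow \<nu> a (b - 1) x e) (at x)"
  using assms unfolding wpow_def
  by (auto intro!: derivative_eq_intros simp: powr_diff mult_ac)

lemma has_real_derivative_wpow_e:
  assumes "e + \<nu> > 0" "x - e > 0"
  shows "((\<lambda>e. wpow \<nu> a b x e) has_real_derivative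
           a * wpow \<nu> (a - 1) b x e - b * wpow \<nu> a (b - 1) x e) (at e)"
  using assms unfolding wpow_def
  by (auto intro!: derivative_eq_intros simp: powr_diff mult_ac)

lemma continuous_on_wpow:
  assumes "continuous_on S X" "continuous_on S E" "\<forall>p \<in> S. E p + \<nu> > 0 \<and> X p - E p > 0"
  shows "continuous_on S (\<lambda>p. wpow \<nu> a b (X p) (E p))"
  unfolding wpow_def using assms(3) by (intro continuous_intros assms(1,2)) force+

text \<open>\<open>kern \<nu> x e = \<surd>(e + \<nu>) / \<surd>(x - e)\<close>; the suffixes name its partial derivatives.\<close>

definition kern :: "real \<Rightarrow> real \<Rightarrow> real \<Rightarrow> real" where
  "kern \<nu> x e = wpow \<nu> (1/2) (-1/2) x e"
definition kern_x :: "real \<Rightarrow> real \<Rightarrow> real \<Rightarrow> real" where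
  "kern_x \<nu> x e = -1/2 * wpow \<nu> (1/2) (-3/2) x e"
definition kern_e :: "real \<Rightarrow> real \<Rightarrow> real \<Rightarrow> real" where
  "kern_e \<nu> x e = 1/2 * wpow \<nu> (-1/2) (-1/2) x e + 1/2 * wpow \<nu> (1/2) (-3/2) x e"
definition kern_xe :: "real \<Rightarrow> real \<Rightarrow> real \<Rightarrow> real" where
  "kern_xe \<nu> x e = -1/4 * wpow \<nu> (-1/2) (-3/2) x e - 3/4 * wpow \<nu> (1/2) (-5/2) x e"
definition kern_ee :: "real \<Rightarrow> real \<Rightarrow> real \<Rightarrow> real" where
  "kern_ee \<nu> x e =
  -1/4 * wpow \<nu> (-3/2) (-1/2) x e + 1/2 * wpow \<nu> (-1/2) (-3/2) x e + 3/4 * wpow \<nu> (1/2) (-5/2) x e"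

lemmas kern_defs = kern_def kern_x_def kern_e_def kern_xe_def kern_ee_def

context
  fixes \<nu> x e :: real
  assumes pos: "e + \<nu> > 0" "x - e > 0"
begin

lemma has_real_derivative_kern_x: "((\<lambda>x. kern \<nu> x e) has_real_derivative kern_x \<nu> x e) (at x)"
  unfolding kern_defs by (rule DERIV_cong[OF has_real_derivative_wpow_x[OF pos]]) simp

lemma has_real_derivative_kern_e: "((\<lambda>e. kern \<nu> x e) has_real_derivative kern_e \<nu> x e) (at e)"
  unfolding kern_defs by (rule DERIV_cong[OF has_real_derivative_wpow_e[OF pos]]) simp

lemma has_real_derivative_kern_x_e: "((\<lambda>e. kern_x \<nu> x e) has_real_derivative kern_xe \<nu> x e) (at e)"
  unfolding kern_defs
  by (rule DERIV_cong[OF DERIV_cmult[OF has_real_derivative_wpow_e[OF pos]]]) (simp add: algebra_simps)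

lemma has_real_derivative_kern_e_x: "((\<lambda>x. kern_e \<nu> x e) has_real_derivative kern_xe \<nu> x e) (at x)"
  unfolding kern_defs
  by (rule DERIV_cong[OF DERIV_add[OF DERIV_cmult DERIV_cmult,
        OF has_real_derivative_wpow_x[OF pos] has_real_derivative_wpow_x[OF pos]]])
     (simp add: algebra_simps)

lemma has_real_derivative_kern_e_e: "((\<lambda>e. kern_e \<nu> x e) has_real_derivative kern_ee \<nu> x e) (at e)"
  unfolding kern_defs
  by (rule DERIV_cong[OF DERIV_add[OF DERIV_cmult DERIV_cmult,
        OF has_real_derivative_wpow_e[OF pos] has_real_derivative_wpow_e[OF pos]]])
     (simp add: algebra_simps)

end

lemma kern_eq_sqrt:
  assumes "e + \<nu> > 0" "x - e > 0"
  shows "kern \<nu> x e = sqrt (e + \<nu>) / sqrt (x - e)"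
proof -
  have "(x - e) powr (-1/2) = 1 / sqrt (x - e)"
    using powr_minus_divide[of "x - e" "1/2"] assms by (simp add: powr_half_sqrt)
  with assms show ?thesis by (simp add: kern_def wpow_def powr_half_sqrt)
qed

definition admissible :: "real \<Rightarrow> (nat \<Rightarrow> real) \<Rightarrow> bool" where
  "admissible \<nu> w \<longleftrightarrow> -\<nu> < w 3 \<and> w 3 < w 2 \<and> w 2 < w 1"

lemma admissible_upd_ball:
  assumes "admissible \<nu> w"
  obtains \<delta> where "\<delta> > 0" "\<And>t. dist t (w k) < \<delta> \<Longrightarrow> admissible \<nu> (w(k := t))"
proof
  define \<delta> where "\<delta> = min (w 3 + \<nu>) (min (w 2 - w 3) (w 1 - w 2))"
  show "\<delta> > 0" using assms by (auto simp: admissible_def \<delta>_def)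
  show "admissible \<nu> (w(k := t))" if "dist t (w k) < \<delta>" for t
    using assms that by (auto simp: admissible_def \<delta>_def dist_real_def abs_less_iff)
qed

lemma eventually_admissible_upd:
  "admissible \<nu> w \<Longrightarrow> eventually (\<lambda>t. admissible \<nu> (w(k := t))) (nhds (w k))"
  unfolding eventually_nhds_metric by (metis admissible_upd_ball)

text \<open>\<open>eta_coeff k \<theta>\<close> is \<open>\<partial>\<eta>/\<partial>u\<^sub>k\<close>.\<close>

definition eta :: "(nat \<Rightarrow> real) \<Rightarrow> real \<Rightarrow> real" where
  "eta w \<theta> = w 3 + (w 2 - w 3) * (sin \<theta>)\<^sup>2"

definition eta_coeff :: "nat \<Rightarrow> real \<Rightarrow> real" where
  "eta_coeff k \<theta> = (if k = 2 then (sin \<theta>)\<^sup>2 else if k = 3 then (cos \<theta>)\<^sup>2 else 0)"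

lemma eta_bounds:
  assumes "admissible \<nu> w" shows "w 3 \<le> eta w \<theta>" "eta w \<theta> \<le> w 2"
proof -
  have "0 \<le> w 2 - w 3" using assms by (simp add: admissible_def)
  moreover have "0 \<le> (sin \<theta>)\<^sup>2" "(sin \<theta>)\<^sup>2 \<le> 1" by (auto simp: abs_square_le_1)
  ultimately have "0 \<le> (w 2 - w 3) * (sin \<theta>)\<^sup>2" "(w 2 - w 3) * (sin \<theta>)\<^sup>2 \<le> w 2 - w 3"
    by (simp_all add: mult_left_le)
  then show "w 3 \<le> eta w \<theta>" "eta w \<theta> \<le> w 2" unfolding eta_def by simp_all
qed

lemma eta_pos:
  assumes "admissible \<nu> w" shows "eta w \<theta> + \<nu> > 0" "w 1 - eta w \<theta> > 0"
  using eta_bounds[OF assms, of \<theta>] assms by (auto simp: admissible_def)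

lemma has_real_derivative_eta:
  "((\<lambda>\<theta>. eta w \<theta>) has_real_derivative (w 2 - w 3) * (2 * sin \<theta> * cos \<theta>)) (at \<theta>)"
  unfolding eta_def by (auto intro!: derivative_eq_intros)

lemma has_real_derivative_eta_upd:
  "((\<lambda>s. eta (w(k := s)) \<theta>) has_real_derivative eta_coeff k \<theta>) (at (w k))"
proof -
  consider "k = 2" | "k = 3" | "k \<noteq> 2" "k \<noteq> 3" by blast
  then show ?thesis
    by cases (auto simp: eta_def eta_coeff_def cos_squared_eq intro!: derivative_eq_intros)
qed

lemma has_real_derivative_comp_eta_upd:
  assumes "(G has_real_derivative G') (at (eta w \<theta>))"
  shows "((\<lambda>s. G (eta (w(k := s)) \<theta>)) has_real_derivative G' * eta_coeff k \<theta>) (at (w k))"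
  by (rule DERIV_chain2[OF _ has_real_derivative_eta_upd]) (simp add: assms)

lemma continuous_on_eta:
  fixes \<Theta> :: "'a::t2_space \<Rightarrow> real"
  shows "(\<And>m. continuous_on S (\<lambda>p. W p m)) \<Longrightarrow> continuous_on S \<Theta> \<Longrightarrow> continuous_on S (\<lambda>p. eta (W p) (\<Theta> p))"
  unfolding eta_def by (auto intro!: continuous_intros)

lemma continuous_on_eta_coeff:
  fixes \<Theta> :: "'a::t2_space \<Rightarrow> real"
  shows "continuous_on S \<Theta> \<Longrightarrow> continuous_on S (\<lambda>p. eta_coeff k (\<Theta> p))"
  unfolding eta_coeff_def by (cases "k = 2"; cases "k = 3") (auto intro!: continuous_intros)

lemma eta_image:
  assumes "admissible \<nu> w"
  shows "eta w ` {0..pi/2} = {w 3..w 2}"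
proof
  show "eta w ` {0..pi/2} \<subseteq> {w 3..w 2}" using eta_bounds[OF assms] by auto
  show "{w 3..w 2} \<subseteq> eta w ` {0..pi/2}"
  proof
    fix y assume "y \<in> {w 3..w 2}"
    moreover have "continuous_on {0..pi/2} (eta w)" "eta w 0 = w 3" "eta w (pi/2) = w 2"
      by (auto simp: eta_def intro!: continuous_intros)
    ultimately obtain x where "x \<in> {0..pi/2}" "eta w x = y"
      using IVT'[of "eta w" 0 y "pi/2"] by auto
    then show "y \<in> eta w ` {0..pi/2}" by blast
  qed
qed

lemma inj_on_eta:
  assumes "admissible \<nu> w"
  shows "inj_on (eta w) {0..pi/2}"
proof (rule inj_onI)
  fix x y assume xy: "x \<in> {0..pi/2}" "y \<in> {0..pi/2}" and "eta w x = eta w y"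
  then have "(sin x)\<^sup>2 = (sin y)\<^sup>2" "sin x \<ge> 0" "sin y \<ge> 0"
    using assms by (auto simp: eta_def admissible_def intro!: sin_ge_zero)
  then have "sin x = sin y" by (simp add: power2_eq_iff_nonneg)
  moreover have "- (pi/2) \<le> x" "x \<le> pi/2" "- (pi/2) \<le> y" "y \<le> pi/2" using xy by auto
  ultimately show "x = y" using sin_inj_pi by blast
qed

definition jfun :: "real \<Rightarrow> (nat \<Rightarrow> real) \<Rightarrow> real \<Rightarrow> real" where
  "jfun \<nu> w \<theta> = 2 * kern \<nu> (w 1) (eta w \<theta>)"

definition jfun_d :: "real \<Rightarrow> (nat \<Rightarrow> real) \<Rightarrow> nat \<Rightarrow> real \<Rightarrow> real" where
  "jfun_d \<nu> w k \<theta> =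
    (if k = 1 then 2 * kern_x \<nu> (w 1) (eta w \<theta>)
     else 2 * kern_e \<nu> (w 1) (eta w \<theta>) * eta_coeff k \<theta>)"

definition jfun_dd :: "real \<Rightarrow> (nat \<Rightarrow> real) \<Rightarrow> nat \<Rightarrow> nat \<Rightarrow> real \<Rightarrow> real" where
  "jfun_dd \<nu> w i j \<theta> =
    (if i = 1 then 2 * kern_xe \<nu> (w 1) (eta w \<theta>) * eta_coeff j \<theta>
     else if j = 1 then 2 * kern_xe \<nu> (w 1) (eta w \<theta>) * eta_coeff i \<theta>
     else 2 * kern_ee \<nu> (w 1) (eta w \<theta>) * eta_coeff i \<theta> * eta_coeff j \<theta>)"

lemma jfun_dd_commute: "jfun_dd \<nu> w i j = jfun_dd \<nu> w j i"
  by (auto simp: jfun_dd_def)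

lemma has_real_derivative_jfun_upd:
  assumes "admissible \<nu> w"
  shows "((\<lambda>s. jfun \<nu> (w(k := s)) \<theta>) has_real_derivative jfun_d \<nu> w k \<theta>) (at (w k))"
proof -
  note pos = eta_pos[OF assms, of \<theta>]
  show ?thesis
  proof (cases "k = 1")
    case True
    have "((\<lambda>x. 2 * kern \<nu> x (eta w \<theta>)) has_real_derivative 2 * kern_x \<nu> (w 1) (eta w \<theta>)) (at (w 1))"
      by (intro DERIV_cmult has_real_derivative_kern_x pos)
    with True show ?thesis by (simp add: jfun_def jfun_d_def eta_def)
  next
    case False
    have "((\<lambda>s. 2 * kern \<nu> (w 1) (eta (w(k := s)) \<theta>)) has_real_derivative
        2 * kern_e \<nu> (w 1) (eta w \<theta>) * eta_coeff k \<theta>) (at (w k))"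
      by (intro has_real_derivative_comp_eta_upd DERIV_cmult has_real_derivative_kern_e pos)
    with False show ?thesis by (simp add: jfun_def jfun_d_def)
  qed
qed

lemma has_real_derivative_jfun_d_upd:
  assumes "admissible \<nu> w" "i \<noteq> j"
  shows "((\<lambda>s. jfun_d \<nu> (w(j := s)) i \<theta>) has_real_derivative jfun_dd \<nu> w i j \<theta>) (at (w j))"
proof -
  note pos = eta_pos[OF assms(1), of \<theta>]
  consider "i = 1" | "j = 1" | "i \<noteq> 1" "j \<noteq> 1" by blast
  then show ?thesis
  proof cases
    case 1
    have "((\<lambda>s. 2 * kern_x \<nu> (w 1) (eta (w(j := s)) \<theta>)) has_real_derivative
        2 * kern_xe \<nu> (w 1) (eta w \<theta>) * eta_coeff j \<theta>) (at (w j))"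
      by (intro has_real_derivative_comp_eta_upd DERIV_cmult has_real_derivative_kern_x_e pos)
    with 1 assms(2) show ?thesis by (simp add: jfun_d_def jfun_dd_def)
  next
    case 2
    have "((\<lambda>x. 2 * kern_e \<nu> x (eta w \<theta>) * eta_coeff i \<theta>) has_real_derivative
        2 * kern_xe \<nu> (w 1) (eta w \<theta>) * eta_coeff i \<theta>) (at (w 1))"
      by (intro DERIV_cmult_right DERIV_cmult has_real_derivative_kern_e_x pos)
    with 2 assms(2) show ?thesis by (simp add: jfun_d_def jfun_dd_def eta_def)
  next
    case 3
    have "((\<lambda>e. 2 * kern_e \<nu> (w 1) e * eta_coeff i \<theta>) has_real_derivative
        2 * kern_ee \<nu> (w 1) (eta w \<theta>) * eta_coeff i \<theta>) (at (eta w \<theta>))"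
      by (intro DERIV_cmult_right DERIV_cmult has_real_derivative_kern_e_e pos)
    from has_real_derivative_comp_eta_upd[OF this, of j]
    have "((\<lambda>s. 2 * kern_e \<nu> (w 1) (eta (w(j := s)) \<theta>) * eta_coeff i \<theta>) has_real_derivative
        2 * kern_ee \<nu> (w 1) (eta w \<theta>) * eta_coeff i \<theta> * eta_coeff j \<theta>) (at (w j))" .
    with 3 show ?thesis by (simp add: jfun_d_def jfun_dd_def)
  qed
qed

lemma continuous_on_kern:
  assumes "continuous_on S X" "continuous_on S E" "\<forall>p \<in> S. E p + \<nu> > 0 \<and> X p - E p > 0"
  shows "continuous_on S (\<lambda>p. kern \<nu> (X p) (E p))" "continuous_on S (\<lambda>p. kern_x \<nu> (X p) (E p))"
    "continuous_on S (\<lambda>p. kern_e \<nu> (X p) (E p))" "continuous_on S (\<lambda>p. kern_xe \<nu> (X p) (E p))"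
    "continuous_on S (\<lambda>p. kern_ee \<nu> (X p) (E p))"
  unfolding kern_defs using assms(3) by (intro continuous_intros continuous_on_wpow assms(1,2); simp)+

lemma continuous_on_jfun:
  fixes \<Theta> :: "'a::t2_space \<Rightarrow> real"
  assumes W: "\<And>m. continuous_on S (\<lambda>p. W p m)" and \<Theta>: "continuous_on S \<Theta>"
    and adm: "\<And>p. p \<in> S \<Longrightarrow> admissible \<nu> (W p)"
  shows "continuous_on S (\<lambda>p. jfun \<nu> (W p) (\<Theta> p))"
    "continuous_on S (\<lambda>p. jfun_d \<nu> (W p) k (\<Theta> p))"
    "continuous_on S (\<lambda>p. jfun_dd \<nu> (W p) i j (\<Theta> p))"
proof -
  have pos: "\<forall>p \<in> S. eta (W p) (\<Theta> p) + \<nu> > 0 \<and> W p 1 - eta (W p) (\<Theta> p) > 0"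
    using eta_pos adm by blast
  note K = continuous_on_kern[OF W continuous_on_eta[OF W \<Theta>] pos]
  note C = continuous_on_eta_coeff[OF \<Theta>]
  show "continuous_on S (\<lambda>p. jfun \<nu> (W p) (\<Theta> p))"
    unfolding jfun_def by (intro continuous_intros K)
  have "continuous_on S (\<lambda>p. 2 * kern_x \<nu> (W p 1) (eta (W p) (\<Theta> p)))"
    "continuous_on S (\<lambda>p. 2 * kern_e \<nu> (W p 1) (eta (W p) (\<Theta> p)) * eta_coeff k (\<Theta> p))"
    by (intro continuous_intros K C)+
  then show "continuous_on S (\<lambda>p. jfun_d \<nu> (W p) k (\<Theta> p))"
    unfolding jfun_d_def by (cases "k = 1") simp_all
  have "continuous_on S (\<lambda>p. 2 * kern_xe \<nu> (W p 1) (eta (W p) (\<Theta> p)) * eta_coeff k (\<Theta> p))"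
    "continuous_on S (\<lambda>p. 2 * kern_ee \<nu> (W p 1) (eta (W p) (\<Theta> p)) * eta_coeff i (\<Theta> p) * eta_coeff j (\<Theta> p))"
    for k by (intro continuous_intros K C)+
  then show "continuous_on S (\<lambda>p. jfun_dd \<nu> (W p) i j (\<Theta> p))"
    unfolding jfun_dd_def by (cases "i = 1"; cases "j = 1") simp_all
qed

lemma has_real_derivative_integral_param:
  fixes f f' :: "real \<Rightarrow> real \<Rightarrow> real"
  assumes "\<delta> > 0"
    and deriv: "\<And>t x. t \<in> ball t0 \<delta> \<Longrightarrow> x \<in> {a..b} \<Longrightarrow> ((\<lambda>s. f s x) has_real_derivative f' t x) (at t)"
    and cont: "\<And>t. t \<in> ball t0 \<delta> \<Longrightarrow> continuous_on {a..b} (f t)"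
    and cont': "continuous_on (ball t0 \<delta> \<times> {a..b}) (\<lambda>p. f' (fst p) (snd p))"
  shows "((\<lambda>t. integral {a..b} (f t)) has_real_derivative integral {a..b} (f' t0)) (at t0)"
proof -
  have "((\<lambda>t. integral (cbox a b) (f t)) has_real_derivative integral (cbox a b) (f' t0))
      (at t0 within ball t0 \<delta>)"
    using \<open>\<delta> > 0\<close> deriv cont cont'
    by (intro leibniz_rule_field_derivative)
       (auto intro: has_field_derivative_at_within integrable_continuous_real simp: case_prod_beta)
  moreover have "at t0 within ball t0 \<delta> = at t0"
    using \<open>\<delta> > 0\<close> by (intro at_within_open) auto
  ultimately show ?thesis by simp
qed

definition jint :: "real \<Rightarrow> (nat \<Rightarrow> real) \<Rightarrow> real" where
  "jint \<nu> w = integral {0..pi/2} (jfun \<nu> w)"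

definition jint_d :: "real \<Rightarrow> (nat \<Rightarrow> real) \<Rightarrow> nat \<Rightarrow> real" where
  "jint_d \<nu> w k = integral {0..pi/2} (jfun_d \<nu> w k)"

definition jint_dd :: "real \<Rightarrow> (nat \<Rightarrow> real) \<Rightarrow> nat \<Rightarrow> nat \<Rightarrow> real" where
  "jint_dd \<nu> w i j = integral {0..pi/2} (jfun_dd \<nu> w i j)"

lemma continuous_on_jfun_fixed:
  assumes "admissible \<nu> w"
  shows "continuous_on S (jfun \<nu> w)" "continuous_on S (jfun_d \<nu> w k)"
    "continuous_on S (jfun_dd \<nu> w i j)"
  using continuous_on_jfun[of S "\<lambda>_. w" "\<lambda>\<theta>. \<theta>"] assms by simp_all

lemma continuous_on_upd_component: "continuous_on S (\<lambda>p. (w(k := fst p)) m)"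
  by (cases "m = k") (auto intro!: continuous_intros)

lemma has_real_derivative_jint_upd:
  assumes "admissible \<nu> w"
  shows "((\<lambda>t. jint \<nu> (w(k := t))) has_real_derivative jint_d \<nu> w k) (at (w k))"
proof -
  obtain \<delta> where "\<delta> > 0" and adm: "\<And>t. t \<in> ball (w k) \<delta> \<Longrightarrow> admissible \<nu> (w(k := t))"
    using admissible_upd_ball[OF assms] by (metis dist_commute mem_ball)
  have "((\<lambda>t. integral {0..pi/2} (jfun \<nu> (w(k := t)))) has_real_derivative
      integral {0..pi/2} (jfun_d \<nu> (w(k := w k)) k)) (at (w k))"
  proof (rule has_real_derivative_integral_param[OF \<open>\<delta> > 0\<close>])
    fix t \<theta> assume "t \<in> ball (w k) \<delta>"
    from has_real_derivative_jfun_upd[OF adm[OF this], of k \<theta>]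
    show "((\<lambda>s. jfun \<nu> (w(k := s)) \<theta>) has_real_derivative jfun_d \<nu> (w(k := t)) k \<theta>) (at t)"
      by simp
  next
    show "continuous_on {0..pi/2} (jfun \<nu> (w(k := t)))" if "t \<in> ball (w k) \<delta>" for t
      using continuous_on_jfun_fixed(1)[OF adm[OF that]] .
  next
    show "continuous_on (ball (w k) \<delta> \<times> {0..pi/2}) (\<lambda>p. jfun_d \<nu> (w(k := fst p)) k (snd p))"
      using adm by (intro continuous_on_jfun(2) continuous_on_upd_component continuous_on_snd) auto
  qed
  then show ?thesis by (simp add: jint_def jint_d_def)
qed

lemma has_real_derivative_jint_d_upd:
  assumes "admissible \<nu> w" "i \<noteq> j"
  shows "((\<lambda>t. jint_d \<nu> (w(j := t)) i) has_real_derivative jint_dd \<nu> w i j) (at (w j))"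
proof -
  obtain \<delta> where "\<delta> > 0" and adm: "\<And>t. t \<in> ball (w j) \<delta> \<Longrightarrow> admissible \<nu> (w(j := t))"
    using admissible_upd_ball[OF assms(1)] by (metis dist_commute mem_ball)
  have "((\<lambda>t. integral {0..pi/2} (jfun_d \<nu> (w(j := t)) i)) has_real_derivative
      integral {0..pi/2} (jfun_dd \<nu> (w(j := w j)) i j)) (at (w j))"
  proof (rule has_real_derivative_integral_param[OF \<open>\<delta> > 0\<close>])
    fix t \<theta> assume "t \<in> ball (w j) \<delta>"
    from has_real_derivative_jfun_d_upd[OF adm[OF this] assms(2), of \<theta>]
    show "((\<lambda>s. jfun_d \<nu> (w(j := s)) i \<theta>) has_real_derivative jfun_dd \<nu> (w(j := t)) i j \<theta>) (at t)"
      by simp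
  next
    show "continuous_on {0..pi/2} (jfun_d \<nu> (w(j := t)) i)" if "t \<in> ball (w j) \<delta>" for t
      using continuous_on_jfun_fixed(2)[OF adm[OF that]] .
  next
    show "continuous_on (ball (w j) \<delta> \<times> {0..pi/2}) (\<lambda>p. jfun_dd \<nu> (w(j := fst p)) i j (snd p))"
      using adm by (intro continuous_on_jfun(3) continuous_on_upd_component continuous_on_snd) auto
  qed
  then show ?thesis by (simp add: jint_d_def jint_dd_def)
qed

lemma integral_derivative_eq_0:
  fixes \<Phi> \<phi> :: "real \<Rightarrow> real"
  assumes "a \<le> b" "\<Phi> a = \<Phi> b" "\<And>x. x \<in> {a..b} \<Longrightarrow> (\<Phi> has_real_derivative \<phi> x) (at x)"
  shows "integral {a..b} \<phi> = 0"
proof -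
  have "(\<phi> has_integral \<Phi> b - \<Phi> a) {a..b}"
    using assms(1,3) by (intro fundamental_theorem_of_calculus)
      (auto simp: has_real_derivative_iff_has_vector_derivative[symmetric] has_field_derivative_at_within)
  then show ?thesis using assms(2) by (simp add: integral_unique)
qed

lemma has_real_derivative_sin_cos_eta:
  assumes "(G has_real_derivative G') (at (eta w \<theta>))"
  shows "((\<lambda>\<theta>. 2 * sin \<theta> * cos \<theta> * G (eta w \<theta>)) has_real_derivative
    2 * ((cos \<theta>)\<^sup>2 - (sin \<theta>)\<^sup>2) * G (eta w \<theta>) + 4 * (w 2 - w 3) * (sin \<theta>)\<^sup>2 * (cos \<theta>)\<^sup>2 * G') (at \<theta>)"
  using DERIV_chain2[OF assms has_real_derivative_eta]
  by (auto intro!: derivative_eq_intros simp: power2_eq_square algebra_simps)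

lemma wpow_half_shifts:
  assumes "x - e > 0"
  shows "wpow \<nu> (-1/2) (-1/2) x e = (x - e) * wpow \<nu> (-1/2) (-3/2) x e"
    "wpow \<nu> (1/2) (-3/2) x e = (x - e) * wpow \<nu> (1/2) (-5/2) x e"
  using wpow_succ[OF assms, of \<nu> "-1/2" "-3/2"] wpow_succ[OF assms, of \<nu> "1/2" "-5/2"] by simp_all

lemma jfun_d_simps:
  "jfun_d \<nu> w 1 \<theta> = 2 * kern_x \<nu> (w 1) (eta w \<theta>)"
  "jfun_d \<nu> w 2 \<theta> = 2 * kern_e \<nu> (w 1) (eta w \<theta>) * (sin \<theta>)\<^sup>2"
  "jfun_d \<nu> w 3 \<theta> = 2 * kern_e \<nu> (w 1) (eta w \<theta>) * (cos \<theta>)\<^sup>2"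
  "jfun_dd \<nu> w 1 2 \<theta> = 2 * kern_xe \<nu> (w 1) (eta w \<theta>) * (sin \<theta>)\<^sup>2"
  "jfun_dd \<nu> w 1 3 \<theta> = 2 * kern_xe \<nu> (w 1) (eta w \<theta>) * (cos \<theta>)\<^sup>2"
  "jfun_dd \<nu> w 2 3 \<theta> = 2 * kern_ee \<nu> (w 1) (eta w \<theta>) * (sin \<theta>)\<^sup>2 * (cos \<theta>)\<^sup>2"
  by (simp_all add: jfun_d_def jfun_dd_def eta_coeff_def)

lemma has_real_derivative_epd_primitive_12:
  assumes "admissible \<nu> w"
  shows "((\<lambda>\<theta>. 2 * sin \<theta> * cos \<theta> * - kern_x \<nu> (w 1) (eta w \<theta>)) has_real_derivative
    2 * (w 1 - w 2) * jfun_dd \<nu> w 1 2 \<theta> - (jfun_d \<nu> w 1 \<theta> - jfun_d \<nu> w 2 \<theta>)) (at \<theta>)"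
proof -
  note pos = eta_pos[OF assms, of \<theta>]
  have "((\<lambda>e. - kern_x \<nu> (w 1) e) has_real_derivative - kern_xe \<nu> (w 1) (eta w \<theta>)) (at (eta w \<theta>))"
    by (intro DERIV_minus has_real_derivative_kern_x_e pos)
  from has_real_derivative_sin_cos_eta[OF this] show ?thesis
    apply (rule DERIV_cong)
    unfolding jfun_d_simps kern_defs
    using wpow_half_shifts[OF pos(2), of \<nu>] sin_cos_squared_add[of \<theta>] eta_def[of w \<theta>] by algebra
qed

lemma has_real_derivative_epd_primitive_13:
  assumes "admissible \<nu> w"
  shows "((\<lambda>\<theta>. 2 * sin \<theta> * cos \<theta> * kern_x \<nu> (w 1) (eta w \<theta>)) has_real_derivative
    2 * (w 1 - w 3) * jfun_dd \<nu> w 1 3 \<theta> - (jfun_d \<nu> w 1 \<theta> - jfun_d \<nu> w 3 \<theta>)) (at \<theta>)"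
proof -
  note pos = eta_pos[OF assms, of \<theta>]
  from has_real_derivative_sin_cos_eta[OF has_real_derivative_kern_x_e[OF pos]] show ?thesis
    apply (rule DERIV_cong)
    unfolding jfun_d_simps kern_defs
    using wpow_half_shifts[OF pos(2), of \<nu>] sin_cos_squared_add[of \<theta>] eta_def[of w \<theta>] by algebra
qed

lemma has_real_derivative_epd_primitive_23:
  assumes "admissible \<nu> w"
  shows "((\<lambda>\<theta>. 2 * sin \<theta> * cos \<theta> * kern_e \<nu> (w 1) (eta w \<theta>)) has_real_derivative
    2 * (w 2 - w 3) * jfun_dd \<nu> w 2 3 \<theta> - (jfun_d \<nu> w 2 \<theta> - jfun_d \<nu> w 3 \<theta>)) (at \<theta>)"
proof -
  note pos = eta_pos[OF assms, of \<theta>]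
  from has_real_derivative_sin_cos_eta[OF has_real_derivative_kern_e_e[OF pos]] show ?thesis
    apply (rule DERIV_cong)
    unfolding jfun_d_simps by (simp add: algebra_simps)
qed

lemma jint_epd_of_primitive:
  assumes "admissible \<nu> w" and "\<Phi> 0 = \<Phi> (pi/2)"
    and "\<And>\<theta>. (\<Phi> has_real_derivative
      2 * (w i - w j) * jfun_dd \<nu> w i j \<theta> - (jfun_d \<nu> w i \<theta> - jfun_d \<nu> w j \<theta>)) (at \<theta>)"
  shows "2 * (w i - w j) * jint_dd \<nu> w i j = jint_d \<nu> w i - jint_d \<nu> w j"
proof -
  have integrable: "jfun_dd \<nu> w i j integrable_on {0..pi/2}" "jfun_d \<nu> w k integrable_on {0..pi/2}" for k
    using continuous_on_jfun_fixed[OF assms(1)] by (auto intro: integrable_continuous_real)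
  have "integral {0..pi/2}
      (\<lambda>\<theta>. 2 * (w i - w j) * jfun_dd \<nu> w i j \<theta> - (jfun_d \<nu> w i \<theta> - jfun_d \<nu> w j \<theta>)) = 0"
    using assms(2,3) by (intro integral_derivative_eq_0[of 0 "pi/2" \<Phi>]) auto
  moreover have "integral {0..pi/2} (\<lambda>\<theta>. c * jfun_dd \<nu> w i j \<theta> - (jfun_d \<nu> w i \<theta> - jfun_d \<nu> w j \<theta>))
      = c * jint_dd \<nu> w i j - (jint_d \<nu> w i - jint_d \<nu> w j)" for c
    unfolding jint_dd_def jint_d_def
    by (simp add: integral_diff integrable_diff integrable integrable_on_mult_right)
  ultimately show ?thesis by simp
qed

lemma jint_epd:
  assumes "admissible \<nu> w" "i \<in> {1,2,3}" "j \<in> {1,2,3}" "i \<noteq> j"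
  shows "2 * (w i - w j) * jint_dd \<nu> w i j = jint_d \<nu> w i - jint_d \<nu> w j"
proof -
  have "2 * (w 1 - w 2) * jint_dd \<nu> w 1 2 = jint_d \<nu> w 1 - jint_d \<nu> w 2"
    "2 * (w 1 - w 3) * jint_dd \<nu> w 1 3 = jint_d \<nu> w 1 - jint_d \<nu> w 3"
    "2 * (w 2 - w 3) * jint_dd \<nu> w 2 3 = jint_d \<nu> w 2 - jint_d \<nu> w 3"
    by (rule jint_epd_of_primitive[OF assms(1) _ has_real_derivative_epd_primitive_12[OF assms(1)]]
          jint_epd_of_primitive[OF assms(1) _ has_real_derivative_epd_primitive_13[OF assms(1)]]
          jint_epd_of_primitive[OF assms(1) _ has_real_derivative_epd_primitive_23[OF assms(1)]];
        simp)+
  moreover have "jint_dd \<nu> w i j = jint_dd \<nu> w j i"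
    unfolding jint_dd_def by (simp add: jfun_dd_commute)
  ultimately show ?thesis
    using assms(2-4) by (auto simp: algebra_simps)
qed

lemma Iint_integrand_comp_eta:
  assumes "admissible \<nu> w" "0 < \<theta>" "\<theta> < pi/2"
  shows "\<bar>(w 2 - w 3) * (2 * sin \<theta> * cos \<theta>)\<bar> * ((eta w \<theta> + \<nu>) /
      sqrt ((eta w \<theta> + \<nu>) * (w 1 - eta w \<theta>) * (w 2 - eta w \<theta>) * (eta w \<theta> - w 3)))
    = jfun \<nu> w \<theta>"
proof -
  define e where "e = eta w \<theta>"
  define K where "K = (w 2 - w 3) * sin \<theta> * cos \<theta>"
  have "sin \<theta> > 0" "cos \<theta> > 0" using assms(2,3) by (auto intro!: sin_gt_zero cos_gt_zero)
  then have "K > 0" using assms(1) by (simp add: K_def admissible_def)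
  have pos: "e + \<nu> > 0" "w 1 - e > 0" using eta_pos[OF assms(1)] by (auto simp: e_def)
  have "(e + \<nu>) * (w 1 - e) * (w 2 - e) * (e - w 3) = (e + \<nu>) * (w 1 - e) * K\<^sup>2"
    unfolding K_def e_def eta_def using sin_cos_squared_add[of \<theta>] by algebra
  then have sqrt_eq: "sqrt ((e + \<nu>) * (w 1 - e) * (w 2 - e) * (e - w 3)) = sqrt (e + \<nu>) * sqrt (w 1 - e) * K"
    using \<open>K > 0\<close> by (simp only: real_sqrt_mult real_sqrt_abs abs_of_pos)
  have abs_eq: "\<bar>(w 2 - w 3) * (2 * sin \<theta> * cos \<theta>)\<bar> = 2 * K"
    using \<open>K > 0\<close> unfolding K_def by simp
  have jfun_eq: "jfun \<nu> w \<theta> = 2 * (sqrt (e + \<nu>) / sqrt (w 1 - e))"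
    unfolding jfun_def e_def[symmetric] kern_eq_sqrt[OF pos] ..
  have "2 * K * ((P * P) / (P * Q * K)) = 2 * (P / Q)" if "P > 0" "Q > 0" for P Q :: real
    using that \<open>K > 0\<close> by (simp add: field_simps)
  from this[of "sqrt (e + \<nu>)" "sqrt (w 1 - e)"] pos
  have "2 * K * ((e + \<nu>) / (sqrt (e + \<nu>) * sqrt (w 1 - e) * K)) = 2 * (sqrt (e + \<nu>) / sqrt (w 1 - e))"
    by simp
  then show ?thesis unfolding e_def[symmetric] sqrt_eq abs_eq jfun_eq .
qed

lemma Ivec_eq_jint:
  assumes adm: "admissible \<nu> w"
  shows "Ivec \<nu> w = jint \<nu> w"
proof -
  define G where "G = (\<lambda>\<eta>. (\<eta> + \<nu>) / sqrt ((\<eta> + \<nu>) * (w 1 - \<eta>) * (w 2 - \<eta>) * (\<eta> - w 3)))"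
  define g' where "g' = (\<lambda>\<theta>. (w 2 - w 3) * (2 * sin \<theta> * cos \<theta>))"
  define H where "H = (\<lambda>\<theta>. \<bar>g' \<theta>\<bar> * G (eta w \<theta>))"
  have H_eq: "H \<theta> = jfun \<nu> w \<theta>" if "\<theta> \<in> {0..pi/2} - {0, pi/2}" for \<theta>
    using that Iint_integrand_comp_eta[OF adm, of \<theta>] by (simp add: H_def G_def g'_def)
  have "jfun \<nu> w integrable_on {0..pi/2}"
    by (rule integrable_continuous_real[OF continuous_on_jfun_fixed(1)[OF adm]])
  then have "H integrable_on {0..pi/2}"
    by (rule integrable_spike[where S = "{0, pi/2}", OF _ _ H_eq]) simp_all
  moreover have "H \<theta> \<ge> 0" if "\<theta> \<in> {0..pi/2}" for \<theta>
    using eta_bounds[OF adm, of \<theta>] eta_pos[OF adm, of \<theta>]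
    unfolding H_def G_def by (intro mult_nonneg_nonneg divide_nonneg_nonneg) auto
  ultimately have "H absolutely_integrable_on {0..pi/2}"
    by (rule nonnegative_absolutely_integrable_1)
  moreover have "integral {0..pi/2} H = jint \<nu> w"
    unfolding jint_def using H_eq by (intro integral_spike[of "{0, pi/2}"]) auto
  moreover have "(eta w has_field_derivative g' \<theta>) (at \<theta> within {0..pi/2})" for \<theta>
    unfolding g'_def by (rule has_field_derivative_at_within[OF has_real_derivative_eta])
  ultimately have "integral (eta w ` {0..pi/2}) G = jint \<nu> w"
    using has_absolute_integral_change_of_variables_1'[of "{0..pi/2}" "eta w" g' G "jint \<nu> w",
        folded H_def] inj_on_eta[OF adm] by simp
  moreover have "Ivec \<nu> w = integral {w 3..w 2} G"
    unfolding Ivec_def Iint_def G_def ..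
  ultimately show ?thesis by (simp add: eta_image[OF adm])
qed

lemma jfun_d_sign:
  assumes "admissible \<nu> w" "\<theta> \<in> {0<..<pi/2}"
  shows "jfun_d \<nu> w 1 \<theta> < 0" "k \<in> {2,3} \<Longrightarrow> jfun_d \<nu> w k \<theta> > 0"
proof -
  note pos = eta_pos[OF assms(1), of \<theta>]
  have "sin \<theta> > 0" "cos \<theta> > 0" using assms(2) by (auto intro!: sin_gt_zero cos_gt_zero)
  then have "k \<in> {2,3} \<Longrightarrow> eta_coeff k \<theta> > 0" by (auto simp: eta_coeff_def)
  moreover have "kern_x \<nu> (w 1) (eta w \<theta>) < 0" "kern_e \<nu> (w 1) (eta w \<theta>) > 0"
    using wpow_pos[OF pos] by (auto simp: kern_defs intro: add_pos_pos)
  ultimately show "jfun_d \<nu> w 1 \<theta> < 0" "k \<in> {2,3} \<Longrightarrow> jfun_d \<nu> w k \<theta> > 0"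
    by (auto simp: jfun_d_def)
qed

lemma jint_d_neq_0:
  assumes "admissible \<nu> w" "k \<in> {1,2,3}"
  shows "jint_d \<nu> w k \<noteq> 0"
proof -
  have cont: "continuous_on {0..pi/2} (jfun_d \<nu> w k)" "continuous_on {0..pi/2} (\<lambda>_. 0::real)"
    using continuous_on_jfun_fixed(2)[OF assms(1)] by auto
  have ne: "{0<..<pi/2::real} \<noteq> {}" using pi_gt_zero by (simp add: not_le)
  consider "k = 1" | "k \<in> {2,3}" using assms(2) by blast
  then show ?thesis
  proof cases
    case 1
    then have "jint_d \<nu> w k < integral {0..pi/2} (\<lambda>_. 0)"
      unfolding jint_d_def using jfun_d_sign(1)[OF assms(1)] by (intro integral_less_real[OF cont ne]) auto
    then show ?thesis by simp
  next
    case 2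
    then have "integral {0..pi/2} (\<lambda>_. 0) < jint_d \<nu> w k"
      unfolding jint_d_def using jfun_d_sign(2)[OF assms(1)] by (intro integral_less_real[OF cont(2,1) ne]) auto
    then show ?thesis by simp
  qed
qed

lemma pderiv_at_Ivec:
  assumes "admissible \<nu> w"
  shows "pderiv_at (Ivec \<nu>) w k = jint_d \<nu> w k"
proof -
  have "eventually (\<lambda>t. Ivec \<nu> (w(k := t)) = jint \<nu> (w(k := t))) (nhds (w k))"
    using eventually_admissible_upd[OF assms] by eventually_elim (rule Ivec_eq_jint)
  then have "deriv (\<lambda>t. Ivec \<nu> (w(k := t))) (w k) = deriv (\<lambda>t. jint \<nu> (w(k := t))) (w k)"
    by (rule deriv_cong_ev) simp
  also have "\<dots> = jint_d \<nu> w k"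
    by (rule DERIV_imp_deriv[OF has_real_derivative_jint_upd[OF assms]])
  finally show ?thesis unfolding pderiv_at_def .
qed

lemma lam_eq_jint:
  "admissible \<nu> w \<Longrightarrow> lam \<nu> w k = w 1 + w 2 + w 3 + 2 * \<nu> - jint \<nu> w / jint_d \<nu> w k"
  unfolding lam_def pderiv_at_Ivec by (simp add: Ivec_eq_jint)

lemma pderiv_at_lam:
  assumes "admissible \<nu> w" "i \<in> {1,2,3}" "j \<in> {1,2,3}" "i \<noteq> j"
  shows "pderiv_at (\<lambda>v. lam \<nu> v i) w j =
    1 - (jint_d \<nu> w j * jint_d \<nu> w i - jint \<nu> w * jint_dd \<nu> w i j) / (jint_d \<nu> w i * jint_d \<nu> w i)"
proof -
  define \<gamma> where "\<gamma> v = v 1 + v 2 + v 3 + 2 * \<nu>" for v :: "nat \<Rightarrow> real"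
  have "eventually (\<lambda>t. lam \<nu> (w(j := t)) i =
      \<gamma> (w(j := t)) - jint \<nu> (w(j := t)) / jint_d \<nu> (w(j := t)) i) (nhds (w j))"
    using eventually_admissible_upd[OF assms(1)] by eventually_elim (simp add: lam_eq_jint \<gamma>_def)
  then have "pderiv_at (\<lambda>v. lam \<nu> v i) w j =
      deriv (\<lambda>t. \<gamma> (w(j := t)) - jint \<nu> (w(j := t)) / jint_d \<nu> (w(j := t)) i) (w j)"
    unfolding pderiv_at_def by (rule deriv_cong_ev) simp
  also have "\<dots> = 1 - (jint_d \<nu> w j * jint_d \<nu> w i - jint \<nu> w * jint_dd \<nu> w i j) /
      (jint_d \<nu> w i * jint_d \<nu> w i)"
  proof (rule DERIV_imp_deriv, rule DERIV_diff)
    show "((\<lambda>t. \<gamma> (w(j := t))) has_real_derivative 1) (at (w j))"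
      using assms(3) by (auto simp: \<gamma>_def intro!: derivative_eq_intros)
    show "((\<lambda>t. jint \<nu> (w(j := t)) / jint_d \<nu> (w(j := t)) i) has_real_derivative
        (jint_d \<nu> w j * jint_d \<nu> w i - jint \<nu> w * jint_dd \<nu> w i j) / (jint_d \<nu> w i * jint_d \<nu> w i))
        (at (w j))"
      using DERIV_divide[OF has_real_derivative_jint_upd[OF assms(1), of j]
          has_real_derivative_jint_d_upd[OF assms(1,4)]] jint_d_neq_0[OF assms(1,2)] by simp
  qed
  finally show ?thesis .
qed

lemma characteristic_speed_quotient:
  fixes J Ji Jj Jij c g :: real
  assumes "J \<noteq> 0" "Ji \<noteq> 0" "Jj \<noteq> 0" "Ji \<noteq> Jj" "c \<noteq> 0" "2 * c * Jij = Ji - Jj"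
  shows "(1 - (Jj * Ji - J * Jij) / (Ji * Ji)) / ((g - J / Ji) - (g - J / Jj))
    = (1/2) * (((g - J / Ji) - g) - 2 * c) / (((g - J / Jj) - g) * c)"
proof -
  have Jij: "Jij = (Ji - Jj) / (2 * c)" using assms by (simp add: field_simps)
  have "Jj - Ji \<noteq> 0" "Ji - Jj \<noteq> 0" using assms by auto
  then show ?thesis unfolding Jij using assms by (simp add: field_simps)
qed

theorem lemma2p3:
  fixes \<nu> :: real and u :: "nat \<Rightarrow> real" and i j :: nat
  assumes "- \<nu> < u 3" and "u 3 < u 2" and "u 2 < u 1"
    and "i \<in> {1,2,3}" and "j \<in> {1,2,3}" and "i \<noteq> j"
    and "lam \<nu> u i \<noteq> lam \<nu> u j"
  shows "pderiv_at (\<lambda>v. lam \<nu> v i) u j / (lam \<nu> u i - lam \<nu> u j)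
     = (1/2) * ((lam \<nu> u i - (u 1 + u 2 + u 3 + 2 * \<nu>)) - 2 * (u i - u j))
       / ((lam \<nu> u j - (u 1 + u 2 + u 3 + 2 * \<nu>)) * (u i - u j))"
proof -
  have adm: "admissible \<nu> u" using assms(1-3) by (simp add: admissible_def)
  note lam = lam_eq_jint[OF adm, of i] lam_eq_jint[OF adm, of j]
  have "jint \<nu> u \<noteq> 0" "jint_d \<nu> u i \<noteq> jint_d \<nu> u j"
    using assms(7) lam by auto
  moreover have "u i - u j \<noteq> 0" using assms(1-6) by auto
  ultimately show ?thesis
    unfolding pderiv_at_lam[OF adm assms(4-6)] lam
    by (intro characteristic_speed_quotient jint_d_neq_0 adm assms(4,5) jint_epd[OF adm assms(4-6)])
qed

end
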